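(* Let $p$ be a prime and let $n=n_1n_2$ with $n_1,n_2\ge 1$ integers, and assume $n$ is not prime. Let $\mathbb{F}_{p^n}$ be represented as a tower $\mathbb{F}_{(p^{n_1})^{n_2}}=\mathbb{F}_{p^{n_1}}[x]/(\psi(x))$, where $\psi\in\mathbb{F}_{p^{n_1}}[x]$ is monic irreducible of degree $n_2$, and let $\rho:\mathbb{F}_{p^{n_1}}[x]\to\mathbb{F}_{p^n}$ be reduction modulo $\psi$. Let $d$ be the largest divisor of $n$ with $1<d<n$, and let $\mathbb{F}_{p^d}\subset\mathbb{F}_{p^n}$ be the unique subfield with $p^d$ elements. Let $T\in\mathbb{F}_{p^n}^*$ be an element not lying in any proper subfield of $\mathbb{F}_{p^n}$, represented by a polynomial of degree larger than $n_2-d/n_1$. Then there exist a nonzero $u\in\mathbb{F}_{p^d}$ and a nonzero polynomial $P\in\mathbb{F}_{p^{n_1}}[x]$ of degree at most $n_2-\lceil d/n_1\rceil$ such that $\rho(P)=uT$. Consequently, for every generator $g$ of $\mathbb{F}_{p^n}^*$, $$\log_g\rho(P)\equiv\log_g T \pmod{\Phi_n(p)}.$$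
   Context: $\Phi_n$ denotes the $n$-th cyclotomic polynomial. For a generator $g$ of the cyclic group $\mathbb{F}_{p^n}^*$, $\log_g z$ denotes the discrete logarithm of $z\in\mathbb{F}_{p^n}^*$, an integer defined modulo $p^n-1$; since $\Phi_n(p)$ divides $p^n-1$, congruences of discrete logarithms modulo $\Phi_n(p)$ are well defined. Elements of $\mathbb{F}_{p^n}$ are represented by their unique representative polynomial of degree $<n_2$ in $\mathbb{F}_{p^{n_1}}[x]$. *)

theory Defs
  imports "HOL-Analysis.Analysis" "HOL-Computational_Algebra.Computational_Algebra"
begin

definition cyclotomic_poly :: "nat \<Rightarrow> complex poly" where
  "cyclotomic_poly n = (\<Prod>k\<in>{k. k < n \<and> coprime k n}. [:- cis (2 * pi * real k / real n), 1:])"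

text \<open>The field F_q[x]/(psi), with elements represented by their unique representative
  polynomial of degree less than deg psi.\<close>
definition tower_carrier :: "'a::field poly \<Rightarrow> 'a poly set" where
  "tower_carrier \<psi> = {q. degree q < degree \<psi>}"

definition is_subfield :: "'a::field poly \<Rightarrow> 'a poly set \<Rightarrow> bool" where
  "is_subfield \<psi> K \<longleftrightarrow> K \<subseteq> tower_carrier \<psi> \<and> 0 \<in> K \<and> 1 \<in> K \<and>
     (\<forall>a\<in>K. \<forall>b\<in>K. a + b \<in> K \<and> (a * b) mod \<psi> \<in> K) \<and>
     (\<forall>a\<in>K. - a \<in> K) \<and>
     (\<forall>a\<in>K. a \<noteq> 0 \<longrightarrow> (\<exists>c\<in>K. (a * c) mod \<psi> = 1))"

definition is_generator :: "'a::field poly \<Rightarrow> 'a poly \<Rightarrow> bool" where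
  "is_generator \<psi> g \<longleftrightarrow> g \<in> tower_carrier \<psi> \<and> g \<noteq> 0 \<and>
     (\<forall>z\<in>tower_carrier \<psi>. z \<noteq> 0 \<longrightarrow> (\<exists>k::nat. g ^ k mod \<psi> = z))"

definition dlog :: "'a::field poly \<Rightarrow> 'a poly \<Rightarrow> 'a poly \<Rightarrow> nat" where
  "dlog \<psi> g z = (LEAST k::nat. g ^ k mod \<psi> = z)"

end

theory Submission
  imports Defs
begin

(* As u runs over the p^d elements of the subfield K, the residues u T mod psi cannot all differ
   in their top ceil(d/n1) - 1 coefficients, which take only p^(n1 (ceil(d/n1) - 1)) < p^d values;
   the difference u of two colliding elements gives a nonzero P = u T mod psi of degree at most
   n2 - ceil(d/n1).  Since u^(p^d - 1) = 1, the group order p^n - 1 divides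
   (p^d - 1) (log P - log T).  Splitting x^n - 1 into the cyclotomic polynomials Phi_e, e | n,
   which have integer coefficients, shows that (p^n - 1)/(p^d - 1) is an integer multiple of
   Phi_n(p); hence Phi_n(p) divides log P - log T. *)

section \<open>Cyclotomic polynomials have integer coefficients\<close>

definition int_coeffs :: "'a::comm_ring_1 poly \<Rightarrow> bool" where
  "int_coeffs P \<longleftrightarrow> (\<forall>i. coeff P i \<in> \<int>)"

lemma int_coeffs_mult: "int_coeffs A \<Longrightarrow> int_coeffs B \<Longrightarrow> int_coeffs (A * B)"
  unfolding int_coeffs_def coeff_mult by (auto intro!: Ints_sum Ints_mult)

lemma int_coeffs_prod: "(\<And>x. x \<in> S \<Longrightarrow> int_coeffs (f x)) \<Longrightarrow> int_coeffs (\<Prod>x\<in>S. f x)"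
proof (induction S rule: infinite_finite_induct)
  case (insert x F)
  then show ?case by (simp add: int_coeffs_mult)
qed (simp_all add: int_coeffs_def coeff_1)

lemma int_coeffs_diff: "int_coeffs A \<Longrightarrow> int_coeffs B \<Longrightarrow> int_coeffs (A - B)"
  unfolding int_coeffs_def by (auto intro!: Ints_diff)

lemma int_coeffs_add: "int_coeffs A \<Longrightarrow> int_coeffs B \<Longrightarrow> int_coeffs (A + B)"
  unfolding int_coeffs_def by (auto intro!: Ints_add)

lemma int_coeffs_monom: "c \<in> \<int> \<Longrightarrow> int_coeffs (monom c k)"
  unfolding int_coeffs_def by (auto simp: coeff_monom)

lemma int_coeffs_x_power_minus_one: "int_coeffs (monom 1 m - 1)"
  unfolding int_coeffs_def by (simp add: coeff_monom coeff_1)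

lemma int_coeffs_monic_cofactor:
  assumes "lead_coeff B = 1" "int_coeffs B" "int_coeffs (B * C)"
  shows "int_coeffs C"
  using assms(3)
proof (induction "degree C" arbitrary: C rule: less_induct)
  case (less C)
  show ?case
  proof (cases "C = 0")
    case True
    then show ?thesis by (simp add: int_coeffs_def)
  next
    case False
    have "coeff (B * C) (degree B + degree C) = lead_coeff C"
      using coeff_mult_degree_sum[of B C] assms(1) by simp
    then have lc: "lead_coeff C \<in> \<int>"
      using less.prems unfolding int_coeffs_def by metis
    define C' where "C' = C - monom (lead_coeff C) (degree C)"
    have "B * C' = B * C - B * monom (lead_coeff C) (degree C)"
      by (simp add: C'_def algebra_simps)
    then have "int_coeffs (B * C')"
      using less.prems lc assms(2) by (auto intro!: int_coeffs_diff int_coeffs_mult int_coeffs_monom)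
    moreover have "C' = 0 \<or> degree C' < degree C"
    proof (cases "C' = 0")
      case False
      have "coeff C' i = 0" if "degree C \<le> i" for i
        using that by (cases "i = degree C") (auto simp: C'_def coeff_monom coeff_eq_0)
      then show ?thesis
        using False by (metis leading_coeff_0_iff not_less)
    qed simp
    ultimately have "int_coeffs C'"
      using less.hyps by (auto simp: int_coeffs_def)
    then show ?thesis
      using lc by (metis C'_def diff_add_cancel int_coeffs_add int_coeffs_monom)
  qed
qed

lemma int_coeffs_poly_in_Ints: "int_coeffs R \<Longrightarrow> x \<in> \<int> \<Longrightarrow> poly R x \<in> \<int>"
  unfolding int_coeffs_def poly_altdef by (auto intro!: Ints_sum Ints_mult Ints_power)

lemma prod_linear_factors_dvd:
  fixes f :: "'a::idom poly"
  assumes "finite S" "f \<noteq> 0" "\<forall>z\<in>S. poly f z = 0"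
  shows "(\<Prod>z\<in>S. [:-z, 1:]) dvd f"
  using assms
proof (induction S arbitrary: f rule: finite_induct)
  case (insert a S)
  obtain g where g: "f = [:-a, 1:] * g"
    using insert.prems poly_eq_0_iff_dvd by (metis dvdE insertI1)
  have "g \<noteq> 0"
    using g insert.prems by auto
  moreover have "\<forall>z\<in>S. poly g z = 0"
    using g insert by auto
  ultimately have "(\<Prod>z\<in>S. [:-z, 1:]) dvd g"
    using insert.IH by blast
  then have "[:-a, 1:] * (\<Prod>z\<in>S. [:-z, 1:]) dvd f"
    unfolding g by (rule mult_dvd_mono[OF dvd_refl])
  then show ?case
    using insert.hyps by simp
qed simp

lemma prod_roots_of_unity_linear_factors:
  assumes "0 < m"
  shows "(\<Prod>k<m. [:- cis (2 * pi * real k / real m), 1:]) = (monom 1 m - 1 :: complex poly)"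
proof -
  define R where "R = {z::complex. z ^ m = 1}"
  define P where "P = (\<Prod>z\<in>R. [:-z, 1:])"
  define X :: "complex poly" where "X = monom 1 m - 1"
  have coeff_X: "coeff X i = (if i = m then 1 else if i = 0 then -1 else 0)" for i
    using assms by (auto simp: X_def coeff_monom)
  have deg_X: "degree X = m"
    by (rule antisym, rule degree_le) (auto simp: coeff_X intro: le_degree)
  have "X \<noteq> 0"
    using assms coeff_X[of m] by auto
  moreover have "finite R"
    unfolding R_def using assms by (intro finite_roots_unity) simp
  ultimately have "P dvd X"
    unfolding P_def by (intro prod_linear_factors_dvd) (auto simp: X_def R_def poly_monom)
  then obtain q where q: "X = P * q" ..
  have "degree P = m"
    unfolding P_def using card_roots_unity_eq[OF assms] by (simp add: degree_prod_sum_eq R_def)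
  have "lead_coeff P = 1"
    unfolding P_def by (simp only: lead_coeff_prod) simp
  have "P \<noteq> 0" "q \<noteq> 0"
    using q \<open>X \<noteq> 0\<close> by auto
  then have "degree q = 0"
    using q deg_X \<open>degree P = m\<close> by (simp add: degree_mult_eq)
  moreover have "lead_coeff q = 1"
    using arg_cong[OF q, of lead_coeff] \<open>lead_coeff P = 1\<close> coeff_X[of m] deg_X
    by (simp add: lead_coeff_mult)
  ultimately have "q = 1"
    by (metis degree_0_id one_pCons)
  moreover have "(\<Prod>k<m. [:- cis (2 * pi * real k / real m), 1:]) = P"
    unfolding P_def R_def using Complex.bij_betw_roots_unity[OF assms] by (rule prod.reindex_bij_betw)
  ultimately show ?thesis
    using q X_def by simp
qed

(* (e, j) corresponds to k = j * (m div e), i.e. to k/m = j/e in lowest terms. *)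
lemma bij_betw_reduced_fractions:
  fixes m :: nat
  assumes "0 < m"
  shows "bij_betw (\<lambda>(e, j). j * (m div e))
           (SIGMA e:{e. e dvd m}. {j. j < e \<and> coprime j e}) {..<m}"
proof (rule bij_betw_byWitness[where f' = "\<lambda>k. (m div gcd k m, k div gcd k m)"])
  have to_fraction: "m div gcd (j * (m div e)) m = e \<and> j * (m div e) div gcd (j * (m div e)) m = j
      \<and> j * (m div e) < m"
    if "e dvd m" "j < e" "coprime j e" for e j
  proof -
    obtain c where m: "m = e * c"
      using \<open>e dvd m\<close> ..
    have "0 < c" "0 < e"
      using assms m by auto
    moreover have "gcd (j * c) m = c * gcd j e"
      by (simp add: m gcd_mult_distrib_nat mult.commute)
    moreover have "gcd j e = 1"
      using \<open>coprime j e\<close> by simp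
    ultimately show ?thesis
      using \<open>j < e\<close> by (simp add: m)
  qed
  have from_fraction: "m div gcd k m dvd m \<and> coprime (k div gcd k m) (m div gcd k m)
      \<and> k div gcd k m < m div gcd k m \<and> k div gcd k m * (m div (m div gcd k m)) = k"
    if "k < m" for k
  proof -
    define g where "g = gcd k m"
    obtain a b where m: "m = g * a" and k: "k = g * b"
      unfolding g_def by (metis gcd_dvd1 gcd_dvd2 dvdE)
    have "0 < g"
      using assms g_def by simp
    moreover have "coprime (k div g) (m div g)"
      unfolding g_def using assms by (intro div_gcd_coprime) auto
    ultimately show ?thesis
      using that unfolding g_def[symmetric] by (simp add: m k)
  qed
  show "\<forall>x\<in>(SIGMA e:{e. e dvd m}. {j. j < e \<and> coprime j e}).
          (\<lambda>k. (m div gcd k m, k div gcd k m)) ((\<lambda>(e, j). j * (m div e)) x) = x"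
       "(\<lambda>(e, j). j * (m div e)) ` (SIGMA e:{e. e dvd m}. {j. j < e \<and> coprime j e}) \<subseteq> {..<m}"
    using to_fraction by auto
  show "\<forall>k\<in>{..<m}. (\<lambda>(e, j). j * (m div e)) ((\<lambda>k. (m div gcd k m, k div gcd k m)) k) = k"
       "(\<lambda>k. (m div gcd k m, k div gcd k m)) ` {..<m}
          \<subseteq> (SIGMA e:{e. e dvd m}. {j. j < e \<and> coprime j e})"
    using from_fraction by auto
qed

lemma prod_cyclotomic_poly_divisors:
  fixes m :: nat
  assumes "0 < m"
  shows "(\<Prod>e | e dvd m. cyclotomic_poly e) = monom 1 m - 1"
proof -
  let ?factor = "\<lambda>k. [:- cis (2 * pi * real k / real m), 1:]"
  let ?S = "SIGMA e:{e. e dvd m}. {j. j < e \<and> coprime j e}"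
  have same_root: "2 * pi * real j / real e = 2 * pi * real (j * (m div e)) / real m"
    if "e dvd m" for e j
    using that assms by (auto elim!: dvdE)
  have "(\<Prod>e | e dvd m. cyclotomic_poly e) = (\<Prod>(e, j)\<in>?S. [:- cis (2 * pi * real j / real e), 1:])"
    unfolding cyclotomic_poly_def using assms by (simp add: prod.Sigma)
  also have "\<dots> = (\<Prod>(e, j)\<in>?S. ?factor (j * (m div e)))"
    by (intro prod.cong refl) (auto simp: same_root)
  also have "\<dots> = (\<Prod>k<m. ?factor k)"
    using prod.reindex_bij_betw[OF bij_betw_reduced_fractions[OF assms], of ?factor]
    by (simp add: case_prod_unfold)
  also have "\<dots> = monom 1 m - 1"
    using assms by (rule prod_roots_of_unity_linear_factors)
  finally show ?thesis .
qed

lemma lead_coeff_cyclotomic_poly [simp]: "lead_coeff (cyclotomic_poly m) = 1"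
  unfolding cyclotomic_poly_def by (simp add: lead_coeff_prod)

lemma int_coeffs_cyclotomic_poly: "int_coeffs (cyclotomic_poly m)"
proof (induction m rule: less_induct)
  case (less m)
  show ?case
  proof (cases "m = 0")
    case True
    then show ?thesis
      by (simp add: cyclotomic_poly_def int_coeffs_def coeff_1)
  next
    case False
    define Q where "Q = (\<Prod>e \<in> {e. e dvd m} - {m}. cyclotomic_poly e)"
    have "monom 1 m - 1 = Q * cyclotomic_poly m"
      using False prod_cyclotomic_poly_divisors[of m] prod.remove[of "{e. e dvd m}" m cyclotomic_poly]
      by (simp add: Q_def mult.commute)
    moreover have "int_coeffs Q"
      unfolding Q_def using False by (intro int_coeffs_prod less.IH) (auto dest: dvd_imp_le)
    moreover have "lead_coeff Q = 1"
      by (simp add: Q_def lead_coeff_prod)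
    ultimately show ?thesis
      by (metis int_coeffs_monic_cofactor int_coeffs_x_power_minus_one)
  qed
qed

lemma cyclotomic_poly_factor_power_minus_one:
  assumes "d dvd n" "0 < d" "d < n" "(x :: complex) \<in> \<int>"
  shows "\<exists>r\<in>\<int>. x ^ n - 1 = (x ^ d - 1) * poly (cyclotomic_poly n) x * r"
proof -
  define R where "R = (\<Prod>e \<in> {e. e dvd n} - {n} - {e. e dvd d}. cyclotomic_poly e)"
  have divisors_d: "{e. e dvd d} \<subseteq> {e. e dvd n} - {n}"
    using assms dvd_imp_le[of _ d] by (auto intro: dvd_trans)
  have "monom 1 n - 1 = cyclotomic_poly n * (\<Prod>e \<in> {e. e dvd n} - {n}. cyclotomic_poly e)"
    using assms prod_cyclotomic_poly_divisors[of n] prod.remove[of "{e. e dvd n}" n cyclotomic_poly]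
    by simp
  also have "(\<Prod>e \<in> {e. e dvd n} - {n}. cyclotomic_poly e) = R * (monom 1 d - 1)"
    unfolding R_def using assms divisors_d
    by (simp add: prod.subset_diff[OF divisors_d] prod_cyclotomic_poly_divisors)
  finally have "monom 1 n - 1 = (monom 1 d - 1) * cyclotomic_poly n * R"
    by (simp add: algebra_simps)
  from arg_cong[OF this, of "\<lambda>P. poly P x"]
  have "x ^ n - 1 = (x ^ d - 1) * poly (cyclotomic_poly n) x * poly R x"
    by (simp add: poly_monom)
  moreover have "poly R x \<in> \<int>"
    unfolding R_def using assms(4)
    by (intro int_coeffs_poly_in_Ints int_coeffs_prod int_coeffs_cyclotomic_poly)
  ultimately show ?thesis
    by blast
qed

lemma of_int_divide_cyclotomic_in_Ints:
  fixes D x :: int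
  assumes "d dvd n" "0 < d" "d < n" "1 < x" "(x ^ n - 1) dvd D * (x ^ d - 1)"
  shows "of_int D / poly (cyclotomic_poly n) (of_int x) \<in> \<int>"
proof -
  let ?\<Phi> = "poly (cyclotomic_poly n) (of_int x)"
  obtain k where k: "D * (x ^ d - 1) = (x ^ n - 1) * k"
    using assms(5) ..
  obtain r where r: "r \<in> \<int>" "of_int x ^ n - 1 = (of_int x ^ d - 1) * ?\<Phi> * r"
    using cyclotomic_poly_factor_power_minus_one[OF assms(1-3), of "of_int x"] by auto
  have "x ^ d \<noteq> 1"
    using assms(2,4) by (metis less_irrefl one_less_power)
  then have nonzero: "(of_int x :: complex) ^ d - 1 \<noteq> 0"
    by (metis eq_iff_diff_eq_0 of_int_eq_1_iff of_int_power)
  have "(of_int x ^ d - 1) * of_int D = (of_int x ^ n - 1) * (of_int k :: complex)"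
    using arg_cong[OF k, of "of_int :: int \<Rightarrow> complex"] by (simp add: mult.commute)
  also have "\<dots> = (of_int x ^ d - 1) * (?\<Phi> * (r * of_int k))"
    by (simp add: r(2) mult_ac)
  finally have "of_int D = ?\<Phi> * (r * of_int k)"
    using mult_left_cancel[OF nonzero] by blast
  then show ?thesis
    using r(1) by (cases "?\<Phi> = 0") auto
qed

section \<open>Residues modulo an irreducible polynomial\<close>

lemma prime_elem_not_dvd_prod:
  assumes "prime_elem m" "\<forall>x\<in>A. \<not> m dvd f x"
  shows "\<not> m dvd prod f A"
  using assms(2)
proof (induction A rule: infinite_finite_induct)
  case (insert x F)
  then show ?case
    using assms(1) by (simp add: prime_elem_dvd_mult_iff)
qed (use assms(1) prime_elem_not_unit in auto)

lemma power_card_nonzero_mod_prime_elem: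
  fixes m u :: "'a::euclidean_ring_cancel"
  assumes m: "prime_elem m" and S: "finite S" "\<forall>x\<in>S. x mod m = x" "\<forall>x\<in>S. \<forall>y\<in>S. (x * y) mod m \<in> S"
    and u: "u \<in> S" "u \<noteq> 0"
  shows "u ^ card (S - {0}) mod m = 1 mod m"
proof -
  let ?S = "S - {0}"
  define f where "f x = (u * x) mod m" for x
  have not_dvd: "\<not> m dvd x" if "x \<in> ?S" for x
    using that S(2) by (metis DiffE dvd_imp_mod_0 singletonI)
  then have not_dvd_u: "\<not> m dvd u"
    using u by blast
  have f_maps: "f x \<in> ?S" if "x \<in> ?S" for x
  proof -
    have "\<not> m dvd u * x"
      using m not_dvd_u not_dvd[OF that] by (simp add: prime_elem_dvd_mult_iff)
    then show ?thesis
      using that S(3) u(1) by (auto simp: f_def mod_eq_0_iff_dvd)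
  qed
  have "inj_on f ?S"
  proof (rule inj_onI)
    fix x y
    assume xy: "x \<in> ?S" "y \<in> ?S" "f x = f y"
    then have "m dvd u * (x - y)"
      by (simp add: f_def mod_eq_dvd_iff right_diff_distrib)
    then have "m dvd x - y"
      using m not_dvd_u by (simp add: prime_elem_dvd_mult_iff)
    then have "x mod m = y mod m"
      by (simp add: mod_eq_dvd_iff)
    then show "x = y"
      using xy(1,2) S(2) by simp
  qed
  moreover have "f ` ?S = ?S"
    using calculation f_maps S(1) by (intro endo_inj_surj) auto
  ultimately have permute: "prod f ?S = \<Prod>?S"
    using prod.reindex[of f ?S id] by simp
  have "(u ^ card ?S * \<Prod>?S) mod m = (\<Prod>x\<in>?S. u * x) mod m"
    by (simp add: prod.distrib)
  also have "\<dots> = prod f ?S mod m"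
    unfolding f_def by (rule mod_prod_eq[symmetric])
  finally have "(u ^ card ?S * \<Prod>?S) mod m = \<Prod>?S mod m"
    by (simp only: permute)
  then have "m dvd (u ^ card ?S - 1) * \<Prod>?S"
    by (simp add: mod_eq_dvd_iff left_diff_distrib)
  moreover have "\<not> m dvd \<Prod>?S"
    using prime_elem_not_dvd_prod[OF m, of ?S id] not_dvd by simp
  ultimately have "m dvd u ^ card ?S - 1"
    using m by (simp add: prime_elem_dvd_mult_iff)
  then show ?thesis
    by (simp add: mod_eq_dvd_iff)
qed

lemma bij_betw_Poly_degree_less:
  assumes "0 < k"
  shows "bij_betw Poly {xs :: 'a::zero list. length xs = k} {q. degree q < k}"
proof (rule bij_betw_imageI)
  show "inj_on Poly {xs :: 'a list. length xs = k}"
    by (rule inj_onI) (metis (mono_tags) coeff_Poly_eq mem_Collect_eq nth_default_nth nth_equalityI)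
  show "Poly ` {xs :: 'a list. length xs = k} = {q. degree q < k}"
  proof (intro equalityI subsetI)
    fix q :: "'a poly"
    assume "q \<in> Poly ` {xs :: 'a list. length xs = k}"
    then obtain xs where "length xs = k" "q = Poly xs"
      by auto
    then have "degree q \<le> k - 1"
      by (intro degree_le) (auto simp: nth_default_def)
    then show "q \<in> {q. degree q < k}"
      using assms by simp
  next
    fix q :: "'a poly"
    assume "q \<in> {q. degree q < k}"
    then have "q = Poly (map (coeff q) [0..<k])"
      by (intro poly_eqI) (auto simp: nth_default_def coeff_eq_0)
    then show "q \<in> Poly ` {xs :: 'a list. length xs = k}"
      by (intro image_eqI) auto
  qed
qed

lemma tower_carrier_mod [simp]: "a \<in> tower_carrier \<psi> \<Longrightarrow> a mod \<psi> = a"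
  unfolding tower_carrier_def by (simp add: mod_poly_less)

lemma dvd_tower_carrier_iff: "a \<in> tower_carrier \<psi> \<Longrightarrow> \<psi> dvd a \<longleftrightarrow> a = 0"
  by (metis dvd_0_right mod_eq_0_iff_dvd tower_carrier_mod)

lemma
  fixes \<psi> :: "'a::{field,finite} poly"
  assumes "0 < degree \<psi>"
  shows finite_tower_carrier: "finite (tower_carrier \<psi>)"
    and card_tower_carrier: "card (tower_carrier \<psi>) = CARD('a) ^ degree \<psi>"
proof -
  have bij: "bij_betw Poly {xs :: 'a list. length xs = degree \<psi>} (tower_carrier \<psi>)"
    unfolding tower_carrier_def using assms by (rule bij_betw_Poly_degree_less)
  show "finite (tower_carrier \<psi>)"
    using bij_betw_finite[OF bij] finite_lists_length_eq[of "UNIV :: 'a set"] by simp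
  show "card (tower_carrier \<psi>) = CARD('a) ^ degree \<psi>"
    using bij_betw_same_card[OF bij] card_lists_length_eq[of "UNIV :: 'a set"] by simp
qed

lemma irreducible_imp_degree_pos: "irreducible (\<psi> :: 'a::field poly) \<Longrightarrow> 0 < degree \<psi>"
  by (metis irreducible_def is_unit_iff_degree neq0_conv)

context
  fixes \<psi> :: "'a::field poly"
  assumes degree_pos: "0 < degree \<psi>"
begin

lemma mod_in_tower_carrier: "a mod \<psi> \<in> tower_carrier \<psi>"
proof -
  have "\<psi> \<noteq> 0"
    using degree_pos by auto
  then show ?thesis
    using degree_pos degree_mod_less[of \<psi> a]
    unfolding tower_carrier_def by (cases "a mod \<psi> = 0") auto
qed

lemma one_in_tower_carrier: "1 \<in> tower_carrier \<psi>"
  using degree_pos by (simp add: tower_carrier_def)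

end

lemma mult_mod_irreducible_nonzero:
  assumes "irreducible \<psi>"
    and "a \<in> tower_carrier \<psi>" "a \<noteq> 0" "b \<in> tower_carrier \<psi>" "b \<noteq> 0"
  shows "(a * b) mod \<psi> \<noteq> 0"
  using assms(2-) field_poly_irreducible_imp_prime[OF assms(1)]
  by (simp add: mod_eq_0_iff_dvd prime_elem_dvd_mult_iff dvd_tower_carrier_iff)

lemma power_card_subfield_mod:
  fixes \<psi> :: "'a::{field,finite} poly"
  assumes \<psi>: "irreducible \<psi>"
    and K: "K \<subseteq> tower_carrier \<psi>" "\<forall>x\<in>K. \<forall>y\<in>K. (x * y) mod \<psi> \<in> K"
    and u: "u \<in> K" "u \<noteq> 0"
  shows "u ^ card (K - {0}) mod \<psi> = 1"
proof -
  have "0 < degree \<psi>"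
    using \<psi> by (rule irreducible_imp_degree_pos)
  have "finite K"
    using K(1) finite_tower_carrier[OF \<open>0 < degree \<psi>\<close>] by (rule finite_subset)
  moreover have "\<forall>x\<in>K. x mod \<psi> = x"
    using K(1) by auto
  ultimately show ?thesis
    using power_card_nonzero_mod_prime_elem[OF field_poly_irreducible_imp_prime[OF \<psi>] _ _ K(2) u]
      one_in_tower_carrier[OF \<open>0 < degree \<psi>\<close>] by simp
qed

lemma power_mod_in_units:
  assumes \<psi>: "irreducible \<psi>" and g: "g \<in> tower_carrier \<psi>" "g \<noteq> 0"
  shows "g ^ k mod \<psi> \<in> tower_carrier \<psi> - {0}"
proof (induction k)
  case 0
  then show ?case
    using one_in_tower_carrier[OF irreducible_imp_degree_pos[OF \<psi>]] by simp
next
  case (Suc k)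
  then have "(g * (g ^ k mod \<psi>)) mod \<psi> \<in> tower_carrier \<psi> - {0}"
    using mult_mod_irreducible_nonzero[OF \<psi> g] mod_in_tower_carrier[OF irreducible_imp_degree_pos[OF \<psi>]]
    by auto
  then show ?case
    by (simp add: mod_mult_right_eq)
qed

lemma generator_power_mod_eq_iff:
  fixes \<psi> g :: "'a::{field,finite} poly"
  assumes \<psi>: "irreducible \<psi>" and g: "is_generator \<psi> g"
  shows "g ^ i mod \<psi> = g ^ j mod \<psi> \<longleftrightarrow>
           i mod card (tower_carrier \<psi> - {0}) = j mod card (tower_carrier \<psi> - {0})"
proof -
  define C where "C = tower_carrier \<psi>"
  define N where "N = card (C - {0})"
  have "0 < degree \<psi>"
    using \<psi> by (rule irreducible_imp_degree_pos)
  have gC: "g \<in> C" "g \<noteq> 0"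
    using g by (auto simp: is_generator_def C_def)
  have "g ^ N mod \<psi> = 1"
    unfolding N_def C_def using \<psi> mod_in_tower_carrier[OF \<open>0 < degree \<psi>\<close>] gC[unfolded C_def]
    by (intro power_card_subfield_mod) auto
  then have periodic: "g ^ k mod \<psi> = g ^ (k mod N) mod \<psi>" for k
  proof -
    have "g ^ k = (g ^ N) ^ (k div N) * g ^ (k mod N)"
      by (simp flip: power_mult power_add)
    then have "g ^ k mod \<psi> = ((g ^ N mod \<psi>) ^ (k div N) mod \<psi> * g ^ (k mod N)) mod \<psi>"
      by (simp add: power_mod mod_mult_left_eq)
    then show ?thesis
      using \<open>g ^ N mod \<psi> = 1\<close> one_in_tower_carrier[OF \<open>0 < degree \<psi>\<close>] by simp
  qed
  have "0 < N"
    using power_mod_in_units[OF \<psi> gC[unfolded C_def], of 0]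
      finite_tower_carrier[OF \<open>0 < degree \<psi>\<close>] by (auto simp: N_def C_def card_gt_0_iff)
  have "(\<lambda>k. g ^ k mod \<psi>) ` {..<N} = C - {0}"
  proof (intro equalityI subsetI)
    fix z
    assume "z \<in> C - {0}"
    then obtain k where "g ^ k mod \<psi> = z"
      using g by (auto simp: is_generator_def C_def)
    then show "z \<in> (\<lambda>k. g ^ k mod \<psi>) ` {..<N}"
      using periodic[of k] \<open>0 < N\<close> by (intro image_eqI[of _ _ "k mod N"]) auto
  next
    fix z
    assume "z \<in> (\<lambda>k. g ^ k mod \<psi>) ` {..<N}"
    then obtain k where "z = g ^ k mod \<psi>"
      by blast
    then show "z \<in> C - {0}"
      using power_mod_in_units[OF \<psi> gC[unfolded C_def], of k] by (simp only: C_def)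
  qed
  then have "inj_on (\<lambda>k. g ^ k mod \<psi>) {..<N}"
    by (intro eq_card_imp_inj_on) (simp_all add: N_def)
  then have "g ^ (i mod N) mod \<psi> = g ^ (j mod N) mod \<psi> \<longleftrightarrow> i mod N = j mod N"
    using \<open>0 < N\<close> by (auto dest: inj_onD)
  then show ?thesis
    unfolding C_def[symmetric] N_def[symmetric] by (simp flip: periodic)
qed

lemma generator_power_dlog:
  assumes "is_generator \<psi> g" "z \<in> tower_carrier \<psi>" "z \<noteq> 0"
  shows "g ^ dlog \<psi> g z mod \<psi> = z"
  using assms unfolding is_generator_def dlog_def by (metis (mono_tags) LeastI)

lemma card_units_dvd_dlog_diff_mult:
  fixes \<psi> g u T :: "'a::{field,finite} poly"
  assumes \<psi>: "irreducible \<psi>" and g: "is_generator \<psi> g"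
    and K: "K \<subseteq> tower_carrier \<psi>" "\<forall>x\<in>K. \<forall>y\<in>K. (x * y) mod \<psi> \<in> K"
    and u: "u \<in> K" "u \<noteq> 0" and T: "T \<in> tower_carrier \<psi>" "T \<noteq> 0"
  shows "int (card (tower_carrier \<psi> - {0})) dvd
           (int (dlog \<psi> g ((u * T) mod \<psi>)) - int (dlog \<psi> g T)) * int (card (K - {0}))"
proof -
  define N where "N = card (tower_carrier \<psi> - {0})"
  define a where "a = dlog \<psi> g u"
  define b where "b = dlog \<psi> g T"
  define z where "z = dlog \<psi> g ((u * T) mod \<psi>)"
  define q where "q = card (K - {0})"
  have uC: "u \<in> tower_carrier \<psi>"
    using K u by blast
  have ga: "g ^ a mod \<psi> = u"
    unfolding a_def using generator_power_dlog[OF g uC u(2)] .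
  have gb: "g ^ b mod \<psi> = T"
    unfolding b_def using generator_power_dlog[OF g T] .
  have "g ^ z mod \<psi> = (u * T) mod \<psi>"
    unfolding z_def using \<psi> uC u(2) T
    by (intro generator_power_dlog[OF g])
      (simp_all add: mod_in_tower_carrier irreducible_imp_degree_pos mult_mod_irreducible_nonzero)
  also have "\<dots> = g ^ (a + b) mod \<psi>"
    by (simp add: power_add mod_mult_eq flip: ga gb)
  finally have "z mod N = (a + b) mod N"
    unfolding N_def using generator_power_mod_eq_iff[OF \<psi> g] by blast
  then have "int N dvd int z - int a - int b"
    by (metis diff_diff_eq mod_eq_dvd_iff of_nat_add zmod_int)
  have "u ^ q mod \<psi> = 1"
    unfolding q_def using \<psi> K u by (rule power_card_subfield_mod)
  then have "g ^ (a * q) mod \<psi> = g ^ 0 mod \<psi>"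
    using one_in_tower_carrier[OF irreducible_imp_degree_pos[OF \<psi>]]
    by (simp add: power_mult power_mod flip: ga)
  then have "(a * q) mod N = 0"
    unfolding N_def using generator_power_mod_eq_iff[OF \<psi> g, of "a * q" 0] by simp
  then have "int N dvd int a * int q"
    by (metis mod_0_imp_dvd of_nat_dvd_iff of_nat_mult)
  with \<open>int N dvd int z - int a - int b\<close> have "int N dvd (int z - int a - int b) * int q + int a * int q"
    by simp
  then show ?thesis
    by (simp add: N_def z_def b_def q_def a_def algebra_simps)
qed

lemma exists_nonzero_mult_mod_degree_less:
  fixes K :: "'a::{field,finite} poly set" and T \<psi> :: "'a poly"
  assumes K: "finite K" "\<forall>a\<in>K. \<forall>b\<in>K. a - b \<in> K" "CARD('a) ^ k < card K"
    and k: "k < degree \<psi>"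
  shows "\<exists>u\<in>K. u \<noteq> 0 \<and> degree ((u * T) mod \<psi>) < degree \<psi> - k"
proof -
  define top where "top u = map (coeff ((u * T) mod \<psi>)) [degree \<psi> - k..<degree \<psi>]" for u
  have "top ` K \<subseteq> {xs. length xs = k}"
    using k by (auto simp: top_def)
  moreover have "finite {xs :: 'a list. length xs = k}"
    using finite_lists_length_eq[of "UNIV :: 'a set" k] by simp
  moreover have "card {xs :: 'a list. length xs = k} < card K"
    using K(3) card_lists_length_eq[of "UNIV :: 'a set" k] by simp
  ultimately have "\<not> inj_on top K"
    by (meson card_inj_on_le not_le)
  then obtain u1 u2 where u12: "u1 \<in> K" "u2 \<in> K" "u1 \<noteq> u2" "top u1 = top u2"
    unfolding inj_on_def by blast
  have "\<psi> \<noteq> 0"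
    using k by auto
  have high_coeff: "coeff (x mod \<psi>) i = 0" if "degree \<psi> \<le> i" for x i
  proof (cases "x mod \<psi> = 0")
    case False
    then have "degree (x mod \<psi>) < i"
      using degree_mod_less'[OF \<open>\<psi> \<noteq> 0\<close> False] that by simp
    then show ?thesis
      by (rule coeff_eq_0)
  qed simp
  have "coeff (((u1 - u2) * T) mod \<psi>) i = 0" if "degree \<psi> - k \<le> i" for i
  proof (cases "i < degree \<psi>")
    case True
    then have "coeff ((u1 * T) mod \<psi>) i = coeff ((u2 * T) mod \<psi>) i"
      using u12(4) that unfolding top_def map_eq_conv by simp
    then show ?thesis
      by (simp add: left_diff_distrib poly_mod_diff_left)
  qed (simp add: high_coeff)
  then have "degree (((u1 - u2) * T) mod \<psi>) \<le> degree \<psi> - k - 1"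
    by (intro degree_le) auto
  then have "degree (((u1 - u2) * T) mod \<psi>) < degree \<psi> - k"
    using k by linarith
  moreover have "u1 - u2 \<in> K"
    using K(2) u12(1,2) by blast
  moreover have "u1 - u2 \<noteq> 0"
    using u12(3) by simp
  ultimately show ?thesis
    by blast
qed

lemma exists_subfield_multiple_low_degree:
  fixes \<psi> T :: "'a::{field,finite} poly"
  assumes \<psi>: "irreducible \<psi>" and K: "is_subfield \<psi> K" "CARD('a) ^ k < card K"
    and "k < degree \<psi>" and T: "T \<in> tower_carrier \<psi>" "T \<noteq> 0"
  shows "\<exists>u\<in>K. u \<noteq> 0 \<and> (u * T) mod \<psi> \<noteq> 0 \<and> degree ((u * T) mod \<psi>) < degree \<psi> - k"
proof -
  have "K \<subseteq> tower_carrier \<psi>"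
    using K(1) by (simp add: is_subfield_def)
  then have "finite K"
    using finite_tower_carrier[OF irreducible_imp_degree_pos[OF \<psi>]] by (rule finite_subset)
  moreover have "\<forall>x\<in>K. \<forall>y\<in>K. x - y \<in> K"
  proof (intro ballI)
    fix x y
    assume "x \<in> K" "y \<in> K"
    then have "x + - y \<in> K"
      using K(1) unfolding is_subfield_def by blast
    then show "x - y \<in> K"
      by (simp only: diff_conv_add_uminus)
  qed
  ultimately obtain u where u: "u \<in> K" "u \<noteq> 0" "degree ((u * T) mod \<psi>) < degree \<psi> - k"
    using exists_nonzero_mult_mod_degree_less[OF _ _ K(2) \<open>k < degree \<psi>\<close>] by blast
  have "u \<in> tower_carrier \<psi>"
    using \<open>K \<subseteq> tower_carrier \<psi>\<close> u(1) by (rule subsetD)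
  then have "(u * T) mod \<psi> \<noteq> 0"
    by (rule mult_mod_irreducible_nonzero[OF \<psi> _ u(2) T])
  then show ?thesis
    using u by blast
qed

lemma cyclotomic_value_dvd_dlog_diff:
  fixes \<psi> g u T :: "'a::{field,finite} poly"
  assumes \<psi>: "irreducible \<psi>" "card (tower_carrier \<psi>) = p ^ n" and g: "is_generator \<psi> g"
    and K: "is_subfield \<psi> K" "card K = p ^ d" and u: "u \<in> K" "u \<noteq> 0"
    and T: "T \<in> tower_carrier \<psi>" "T \<noteq> 0"
    and "d dvd n" "0 < d" "d < n" "1 < p"
  shows "(of_int (int (dlog \<psi> g ((u * T) mod \<psi>)) - int (dlog \<psi> g T))
           / poly (cyclotomic_poly n) (of_nat p) :: complex) \<in> \<int>"
proof -
  have K_sub: "K \<subseteq> tower_carrier \<psi>" and K_mult: "\<forall>x\<in>K. \<forall>y\<in>K. (x * y) mod \<psi> \<in> K"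
    and "0 \<in> K"
    using K(1) by (simp_all add: is_subfield_def)
  have "0 < degree \<psi>"
    using \<psi>(1) by (rule irreducible_imp_degree_pos)
  then have "int (card (tower_carrier \<psi> - {0})) = int p ^ n - 1"
    using finite_tower_carrier \<psi>(2) \<open>1 < p\<close> by (simp add: tower_carrier_def of_nat_diff)
  moreover have "finite K"
    using K_sub finite_tower_carrier[OF \<open>0 < degree \<psi>\<close>] by (rule finite_subset)
  then have "int (card (K - {0})) = int p ^ d - 1"
    using \<open>0 \<in> K\<close> K(2) \<open>1 < p\<close> by (simp add: of_nat_diff)
  ultimately have "(int p ^ n - 1) dvd
      (int (dlog \<psi> g ((u * T) mod \<psi>)) - int (dlog \<psi> g T)) * (int p ^ d - 1)"
    using card_units_dvd_dlog_diff_mult[OF \<psi>(1) g K_sub K_mult u T] by simp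
  then have "(of_int (int (dlog \<psi> g ((u * T) mod \<psi>)) - int (dlog \<psi> g T))
      / poly (cyclotomic_poly n) (of_int (int p)) :: complex) \<in> \<int>"
    using assms(10-13) by (intro of_int_divide_cyclotomic_in_Ints) simp_all
  then show ?thesis
    by simp
qed

lemma ceiling_divide_bounds:
  fixes a b :: nat
  assumes "0 < a" "0 < b"
  shows "0 < \<lceil>real a / real b\<rceil>" "b * nat (\<lceil>real a / real b\<rceil> - 1) < a"
proof -
  let ?c = "\<lceil>real a / real b\<rceil>"
  show "0 < ?c"
    using assms by simp
  have "real_of_int ?c - 1 < real a / real b"
    using ceiling_correct by auto
  then have "real b * (real_of_int ?c - 1) < real a"
    using assms(2) by (simp add: pos_less_divide_eq mult.commute)
  moreover have "real (nat (?c - 1)) = real_of_int ?c - 1"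
    using \<open>0 < ?c\<close> by simp
  ultimately have "real (b * nat (?c - 1)) < real a"
    by simp
  then show "b * nat (?c - 1) < a"
    by (simp only: of_nat_less_iff)
qed

theorem mainTheorem1:
  fixes p n n1 n2 d :: nat and \<psi> T :: "'a::{field,finite} poly"
  assumes "prime p"
    and "CARD('a) = p ^ n1"
    and "n1 \<ge> 1" and "n2 \<ge> 1" and "n = n1 * n2" and "\<not> prime n"
    and "lead_coeff \<psi> = 1" and "irreducible \<psi>" and "degree \<psi> = n2"
    and "d dvd n" and "1 < d" and "d < n"
    and "\<forall>e. e dvd n \<and> 1 < e \<and> e < n \<longrightarrow> e \<le> d"
    and "T \<in> tower_carrier \<psi>" and "T \<noteq> 0"
    and "\<forall>K. is_subfield \<psi> K \<and> T \<in> K \<longrightarrow> K = tower_carrier \<psi>"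
    and "real (degree T) > real n2 - real d / real n1"
  shows "\<forall>K. is_subfield \<psi> K \<and> card K = p ^ d \<longrightarrow>
           (\<exists>u\<in>K. u \<noteq> 0 \<and> (\<exists>P. P \<noteq> 0 \<and>
              int (degree P) \<le> int n2 - \<lceil>real d / real n1\<rceil> \<and>
              P mod \<psi> = (u * T) mod \<psi> \<and>
              (\<forall>g. is_generator \<psi> g \<longrightarrow>
                 (of_int (int (dlog \<psi> g (P mod \<psi>)) - int (dlog \<psi> g T))
                    / poly (cyclotomic_poly n) (of_nat p) :: complex) \<in> \<int>)))"
proof (intro allI impI)
  fix K
  assume K: "is_subfield \<psi> K \<and> card K = p ^ d"
  have "1 < p"
    using assms(1) by (rule prime_gt_1_nat)
  define k where "k = nat (\<lceil>real d / real n1\<rceil> - 1)"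
  have "0 < \<lceil>real d / real n1\<rceil>" "n1 * k < d"
    using ceiling_divide_bounds[of d n1] assms(3,11) by (simp_all add: k_def)
  then have k: "int k = \<lceil>real d / real n1\<rceil> - 1"
    by (simp add: k_def)
  have "n1 * k < n1 * n2"
    using \<open>n1 * k < d\<close> assms(5,12) by linarith
  then have "k < n2"
    by simp
  have "CARD('a) ^ k = p ^ (n1 * k)"
    by (simp add: assms(2) power_mult)
  also have "\<dots> < card K"
    using \<open>n1 * k < d\<close> \<open>1 < p\<close> K by (simp add: power_strict_increasing)
  finally have "\<exists>u\<in>K. u \<noteq> 0 \<and> (u * T) mod \<psi> \<noteq> 0 \<and> degree ((u * T) mod \<psi>) < degree \<psi> - k"
    using K \<open>k < n2\<close> assms(9,14,15) by (intro exists_subfield_multiple_low_degree[OF assms(8)]) simp_all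
  then obtain u where u: "u \<in> K" "u \<noteq> 0" "(u * T) mod \<psi> \<noteq> 0"
    "degree ((u * T) mod \<psi>) < n2 - k"
    by (auto simp: assms(9))
  have "card (tower_carrier \<psi>) = p ^ n"
    using card_tower_carrier[of \<psi>] assms(2-5,9) by (simp add: power_mult)
  show "\<exists>u\<in>K. u \<noteq> 0 \<and> (\<exists>P. P \<noteq> 0 \<and> int (degree P) \<le> int n2 - \<lceil>real d / real n1\<rceil> \<and>
          P mod \<psi> = (u * T) mod \<psi> \<and>
          (\<forall>g. is_generator \<psi> g \<longrightarrow>
             (of_int (int (dlog \<psi> g (P mod \<psi>)) - int (dlog \<psi> g T))
                / poly (cyclotomic_poly n) (of_nat p) :: complex) \<in> \<int>))"
  proof (intro bexI[OF _ u(1)] conjI u(2,3) exI[of _ "(u * T) mod \<psi>"] allI impI)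
    show "int (degree ((u * T) mod \<psi>)) \<le> int n2 - \<lceil>real d / real n1\<rceil>"
      using u(4) k \<open>k < n2\<close> by (simp add: less_diff_conv)
    show "(u * T) mod \<psi> mod \<psi> = (u * T) mod \<psi>"
      by simp
    fix g
    assume "is_generator \<psi> g"
    with cyclotomic_value_dvd_dlog_diff[OF assms(8) \<open>card _ = p ^ n\<close> _ _ _ u(1,2) assms(14,15,10)]
    show "(of_int (int (dlog \<psi> g ((u * T) mod \<psi> mod \<psi>)) - int (dlog \<psi> g T))
        / poly (cyclotomic_poly n) (of_nat p) :: complex) \<in> \<int>"
      using K assms(11,12) \<open>1 < p\<close> by simp
  qed
qed

end
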